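(* Let $\{\zeta_k\}_{k\ge1}$ be i.i.d. standard exponential random variables, $\eta_i:=-\log\left(\sum_{k=1}^i\zeta_k\right)$ for $i\ge1$, and let $\{Z_{ij}\}_{1\le i<j}$ be i.i.d. standard normal random variables independent of the $\eta_i$. For $c\ge0$ define $$Y_c:=\sup_{i<j}\left\{\frac{\eta_i+\eta_j}{\sqrt2}+cZ_{ij}\right\}.$$ Then (i) $Y_c<\infty$ almost surely for every $c\ge0$; and (ii) if $(\gamma_m)_{m\ge1}$ is a sequence of nonnegative reals with $\gamma_m\to c$, then $Y_{\gamma_m}\xrightarrow{d}Y_c$ as $m\to\infty$. *)

theory Defs
  imports "HOL-Probability.Probability"
begin

definition eta_rv :: "(nat \<Rightarrow> 'a \<Rightarrow> real) \<Rightarrow> nat \<Rightarrow> 'a \<Rightarrow> real" where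
  "eta_rv \<zeta> i \<omega> = - ln (\<Sum>k\<in>{1..i}. \<zeta> k \<omega>)"

definition Y_rv :: "(nat \<Rightarrow> 'a \<Rightarrow> real) \<Rightarrow> (nat \<Rightarrow> nat \<Rightarrow> 'a \<Rightarrow> real) \<Rightarrow> real \<Rightarrow> 'a \<Rightarrow> ereal" where
  "Y_rv \<zeta> Z c \<omega> =
     (SUP p\<in>{(i, j). 1 \<le> i \<and> i < j}.
        ereal ((eta_rv \<zeta> (fst p) \<omega> + eta_rv \<zeta> (snd p) \<omega>) / sqrt 2 + c * Z (fst p) (snd p) \<omega>))"

definition joint_family :: "(nat \<Rightarrow> 'a \<Rightarrow> real) \<Rightarrow> (nat \<Rightarrow> nat \<Rightarrow> 'a \<Rightarrow> real) \<Rightarrow> nat + nat \<times> nat \<Rightarrow> 'a \<Rightarrow> real" where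
  "joint_family \<zeta> Z x = (case x of Inl k \<Rightarrow> \<zeta> k | Inr (i, j) \<Rightarrow> Z i j)"

definition joint_index :: "(nat + nat \<times> nat) set" where
  "joint_index = Inl ` {k. 1 \<le> k} \<union> Inr ` {(i, j). 1 \<le> i \<and> i < j}"

end

theory Submission
  imports Defs
begin

text \<open>
  Almost surely, by Borel-Cantelli, the partial sums \<open>\<zeta>\<^sub>1 + \<dots> + \<zeta>\<^sub>n\<close> eventually exceed \<open>n/2\<close>
  (a Chernoff bound for the Erlang distribution), so \<open>\<eta>\<^sub>i \<le> U - ln i\<close> for all \<open>i\<close>; and
  \<open>|Z\<^sub>i\<^sub>j| \<le> 4 \<surd>(ln j)\<close> for all \<open>i < j\<close> once \<open>j\<close> is large (a Gaussian tail bound and a union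
  bound over \<open>i < j\<close>). Then \<open>(\<eta>\<^sub>i + \<eta>\<^sub>j)/\<surd>2 + C |Z\<^sub>i\<^sub>j| \<le> R - (ln j)/4\<close>, so only finitely many
  pairs reach any given level. Consequently, for \<open>|\<gamma>| \<le> C\<close> the supremum \<open>Y\<^sub>\<gamma>\<close> is the maximum of
  finitely many affine functions of \<open>\<gamma>\<close>, taken over a set that does not depend on \<open>\<gamma>\<close>: it is
  finite and continuous in \<open>\<gamma>\<close>. So \<open>Y\<^sub>\<gamma>\<^sub>m \<rightarrow> Y\<^sub>c\<close> almost surely, which implies convergence
  in distribution.
\<close>

lemma tendsto_Max_image:
  fixes g :: "'p \<Rightarrow> 'b \<Rightarrow> 'c::linorder_topology"
  assumes "finite F" "F \<noteq> {}" "\<And>p. p \<in> F \<Longrightarrow> (g p \<longlongrightarrow> l p) net"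
  shows "((\<lambda>x. Max ((\<lambda>p. g p x) ` F)) \<longlongrightarrow> Max (l ` F)) net"
  using assms
proof (induction F rule: finite_ne_induct)
  case (singleton p)
  then show ?case by simp
next
  case (insert p F)
  then have "((\<lambda>x. max (g p x) (Max ((\<lambda>q. g q x) ` F))) \<longlongrightarrow> max (l p) (Max (l ` F))) net"
    by (intro tendsto_max) auto
  with insert show ?case by simp
qed

lemma SUP_affine_eq_Max_locally:
  fixes a b :: "'p \<Rightarrow> real"
  assumes levels: "\<And>K. finite {p\<in>P. K \<le> a p + C * \<bar>b p\<bar>}" and "P \<noteq> {}" and "0 \<le> C"
  obtains F where "finite F" "F \<noteq> {}" "F \<subseteq> P"
    "\<And>\<gamma>. \<bar>\<gamma>\<bar> \<le> C \<Longrightarrow> (SUP p\<in>P. ereal (a p + \<gamma> * b p)) = ereal (Max ((\<lambda>p. a p + \<gamma> * b p) ` F))"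
proof -
  obtain p0 where p0: "p0 \<in> P" using \<open>P \<noteq> {}\<close> by blast
  define F where "F = {p\<in>P. a p0 - C * \<bar>b p0\<bar> \<le> a p + C * \<bar>b p\<bar>}"
  have "finite F" unfolding F_def by (rule levels)
  moreover have "p0 \<in> F" "F \<subseteq> P" unfolding F_def using p0 \<open>0 \<le> C\<close> by auto
  moreover have "(SUP p\<in>P. ereal (a p + \<gamma> * b p)) = ereal (Max ((\<lambda>p. a p + \<gamma> * b p) ` F))"
    if \<gamma>: "\<bar>\<gamma>\<bar> \<le> C" for \<gamma>
  proof -
    let ?f = "\<lambda>p. a p + \<gamma> * b p"
    \<comment> \<open>Outside \<open>F\<close> the perturbed value lies below the perturbed value at \<open>p0\<close>.\<close>
    have perturb: "a p - C * \<bar>b p\<bar> \<le> ?f p \<and> ?f p \<le> a p + C * \<bar>b p\<bar>" for p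
    proof -
      have "\<bar>\<gamma> * b p\<bar> \<le> C * \<bar>b p\<bar>"
        using \<gamma> by (simp add: abs_mult mult_right_mono)
      then show ?thesis by (simp add: abs_le_iff)
    qed
    have bounded: "?f p \<le> Max (?f ` F)" if "p \<in> P" for p
    proof (cases "p \<in> F")
      case True
      with \<open>finite F\<close> show ?thesis by simp
    next
      case False
      with that have "?f p \<le> ?f p0" using perturb[of p] perturb[of p0] by (auto simp: F_def)
      also have "\<dots> \<le> Max (?f ` F)" using \<open>finite F\<close> \<open>p0 \<in> F\<close> by simp
      finally show ?thesis .
    qed
    obtain q where q: "q \<in> F" "Max (?f ` F) = ?f q"
      using Max_in[of "?f ` F"] \<open>finite F\<close> \<open>p0 \<in> F\<close> by fastforce
    show ?thesis
    proof (rule antisym)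
      show "(SUP p\<in>P. ereal (?f p)) \<le> ereal (Max (?f ` F))"
        by (rule SUP_least) (simp add: bounded)
      show "ereal (Max (?f ` F)) \<le> (SUP p\<in>P. ereal (?f p))"
        unfolding q(2) using q(1) \<open>F \<subseteq> P\<close> by (intro SUP_upper) auto
    qed
  qed
  ultimately show thesis using that by blast
qed

lemma
  fixes a b :: "'p \<Rightarrow> real"
  assumes levels: "\<And>C K. 0 \<le> C \<Longrightarrow> finite {p\<in>P. K \<le> a p + C * \<bar>b p\<bar>}" and "P \<noteq> {}"
  shows SUP_affine_less_infinity: "(SUP p\<in>P. ereal (a p + \<gamma> * b p)) < \<infinity>"
    and isCont_SUP_affine: "isCont (\<lambda>\<gamma>. real_of_ereal (SUP p\<in>P. ereal (a p + \<gamma> * b p))) c"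
proof -
  have nonneg: "0 \<le> \<bar>\<gamma>\<bar>" by simp
  obtain F where "finite F" "F \<noteq> {}" "F \<subseteq> P"
    and "\<And>\<gamma>'. \<bar>\<gamma>'\<bar> \<le> \<bar>\<gamma>\<bar> \<Longrightarrow> (SUP p\<in>P. ereal (a p + \<gamma>' * b p)) = ereal (Max ((\<lambda>p. a p + \<gamma>' * b p) ` F))"
    by (rule SUP_affine_eq_Max_locally[OF levels[OF nonneg] \<open>P \<noteq> {}\<close> nonneg]) blast
  then show "(SUP p\<in>P. ereal (a p + \<gamma> * b p)) < \<infinity>" by simp
  have nonneg': "0 \<le> \<bar>c\<bar> + 1" by simp
  obtain F where F: "finite F" "F \<noteq> {}" "F \<subseteq> P"
    and Max: "\<And>\<gamma>. \<bar>\<gamma>\<bar> \<le> \<bar>c\<bar> + 1 \<Longrightarrow> (SUP p\<in>P. ereal (a p + \<gamma> * b p)) = ereal (Max ((\<lambda>p. a p + \<gamma> * b p) ` F))"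
    by (rule SUP_affine_eq_Max_locally[OF levels[OF nonneg'] \<open>P \<noteq> {}\<close> nonneg']) blast
  have near: "eventually (\<lambda>\<gamma>. \<bar>\<gamma>\<bar> \<le> \<bar>c\<bar> + 1) (at c)"
    unfolding eventually_at dist_real_def by (rule exI[of _ 1]) auto
  have "((\<lambda>\<gamma>. Max ((\<lambda>p. a p + \<gamma> * b p) ` F)) \<longlongrightarrow> Max ((\<lambda>p. a p + c * b p) ` F)) (at c)"
    using F by (intro tendsto_Max_image tendsto_intros) auto
  moreover have "eventually (\<lambda>\<gamma>. Max ((\<lambda>p. a p + \<gamma> * b p) ` F) = real_of_ereal (SUP p\<in>P. ereal (a p + \<gamma> * b p))) (at c)"
    using near by eventually_elim (simp add: Max)
  ultimately have "((\<lambda>\<gamma>. real_of_ereal (SUP p\<in>P. ereal (a p + \<gamma> * b p))) \<longlongrightarrow> Max ((\<lambda>p. a p + c * b p) ` F)) (at c)"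
    by (rule Lim_transform_eventually)
  then show "isCont (\<lambda>\<gamma>. real_of_ereal (SUP p\<in>P. ereal (a p + \<gamma> * b p))) c"
    unfolding isCont_def using Max[of c] by simp
qed

lemma ln_ge_ln_minus_const_of_eventually_gt_half:
  fixes G :: "nat \<Rightarrow> real"
  assumes "eventually (\<lambda>n. real n / 2 < G n) sequentially"
  obtains U where "\<And>i. 1 \<le> i \<Longrightarrow> - ln (G i) \<le> U - ln (real i)"
proof -
  obtain N where N: "\<And>n. N \<le> n \<Longrightarrow> real n / 2 < G n"
    using assms by (auto simp: eventually_sequentially)
  define S where "S = (\<Sum>k<N. \<bar>ln (real k) - ln (G k)\<bar>)"
  have "- ln (G i) \<le> (ln 2 + S) - ln (real i)" if "1 \<le> i" for i
  proof (cases "i < N")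
    case True
    have "ln (real i) - ln (G i) \<le> \<bar>ln (real i) - ln (G i)\<bar>" by simp
    also have "\<dots> \<le> S" unfolding S_def by (rule member_le_sum) (use True in auto)
    finally show ?thesis using ln_ge_zero[of "2::real"] by linarith
  next
    case False
    then have "ln (real i / 2) < ln (G i)"
      using N[of i] that by (intro ln_less_cancel_iff[THEN iffD2]) auto
    moreover have "0 \<le> S" unfolding S_def by (intro sum_nonneg) auto
    ultimately show ?thesis using that by (simp add: ln_div)
  qed
  then show thesis by (rule that)
qed

lemma finite_pair_level_sets:
  fixes e :: "nat \<Rightarrow> real" and z :: "nat \<Rightarrow> nat \<Rightarrow> real"
  assumes e: "\<And>i. 1 \<le> i \<Longrightarrow> e i \<le> U - ln (real i)"
    and z: "eventually (\<lambda>j. \<forall>i\<in>{1..<j}. \<bar>z i j\<bar> \<le> B * sqrt (ln (real j))) sequentially"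
    and "0 \<le> B" "0 \<le> C"
  shows "finite {(i, j). 1 \<le> i \<and> i < j \<and> K \<le> (e i + e j) / sqrt 2 + C * \<bar>z i j\<bar>}"
proof -
  define R where "R = 2 * \<bar>U\<bar> + (B * C)\<^sup>2"
  have bound: "(e i + e j) / sqrt 2 + C * \<bar>z i j\<bar> \<le> R - ln (real j) / 4"
    if "1 \<le> i" "i < j" "\<bar>z i j\<bar> \<le> B * sqrt (ln (real j))" for i j
  proof -
    define L where "L = ln (real j)"
    have "0 \<le> L" "0 \<le> ln (real i)" using that by (simp_all add: L_def)
    then have "e i + e j \<le> 2 * \<bar>U\<bar> - L"
      using e[of i] e[of j] that unfolding L_def by linarith
    then have "(e i + e j) / sqrt 2 \<le> (2 * \<bar>U\<bar> - L) / sqrt 2"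
      by (simp add: divide_right_mono)
    also have "\<dots> = 2 * \<bar>U\<bar> / sqrt 2 - L / sqrt 2" by (simp add: diff_divide_distrib)
    also have "\<dots> \<le> 2 * \<bar>U\<bar> - L / 2"
    proof -
      have "2 * \<bar>U\<bar> / sqrt 2 \<le> 2 * \<bar>U\<bar>" by (simp add: divide_le_eq mult_le_cancel_left1)
      moreover have "L / 2 \<le> L / sqrt 2"
        using \<open>0 \<le> L\<close> sqrt2_less_2 by (intro divide_left_mono) auto
      ultimately show ?thesis by linarith
    qed
    finally have A: "(e i + e j) / sqrt 2 \<le> 2 * \<bar>U\<bar> - L / 2" .
    \<comment> \<open>AM-GM: \<open>B C \<surd>L \<le> L/4 + (B C)\<^sup>2\<close>.\<close>
    have "C * \<bar>z i j\<bar> \<le> B * C * sqrt L"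
      using mult_left_mono[OF that(3) \<open>0 \<le> C\<close>] unfolding L_def by (simp add: ac_simps)
    also have "\<dots> \<le> L / 4 + (B * C)\<^sup>2"
      using \<open>0 \<le> L\<close> zero_le_power2[of "sqrt L / 2 - B * C"] by (simp add: power2_eq_square algebra_simps)
    finally show ?thesis using A unfolding R_def L_def by linarith
  qed
  have "filterlim (\<lambda>j. ln (real j)) at_top sequentially"
    by (rule filterlim_compose[OF ln_at_top filterlim_real_sequentially])
  then have "eventually (\<lambda>j. 4 * (R - K) < ln (real j)) sequentially"
    by (simp add: filterlim_at_top_dense)
  then have "eventually (\<lambda>j. 4 * (R - K) < ln (real j) \<and> (\<forall>i\<in>{1..<j}. \<bar>z i j\<bar> \<le> B * sqrt (ln (real j)))) sequentially"
    using z by (rule eventually_conj)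
  then obtain J where J: "\<And>j. J \<le> j \<Longrightarrow> 4 * (R - K) < ln (real j) \<and> (\<forall>i\<in>{1..<j}. \<bar>z i j\<bar> \<le> B * sqrt (ln (real j)))"
    unfolding eventually_sequentially by blast
  have small: "j < J" if ij: "1 \<le> i" "i < j" "K \<le> (e i + e j) / sqrt 2 + C * \<bar>z i j\<bar>" for i j
  proof (rule ccontr)
    assume "\<not> j < J"
    then have far: "4 * (R - K) < ln (real j)" and z_ij: "\<bar>z i j\<bar> \<le> B * sqrt (ln (real j))"
      using J[of j] ij by auto
    have "R - ln (real j) / 4 < K" using far by simp
    with ij(3) bound[OF ij(1,2) z_ij] show False by simp
  qed
  have "{(i, j). 1 \<le> i \<and> i < j \<and> K \<le> (e i + e j) / sqrt 2 + C * \<bar>z i j\<bar>} \<subseteq> {..<J} \<times> {..<J}"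
    using small by fastforce
  then show ?thesis by (rule finite_subset) simp
qed

lemma (in prob_space) AE_eventually_of_summable_prob:
  assumes "\<And>n. {\<omega>\<in>space M. \<not> P n \<omega>} \<in> events"
    and "summable (\<lambda>n. prob {\<omega>\<in>space M. \<not> P n \<omega>})"
  shows "AE \<omega> in M. eventually (\<lambda>n. P n \<omega>) sequentially"
  using borel_cantelli_AE1[of "\<lambda>n. {\<omega>\<in>space M. \<not> P n \<omega>}" M] assms
  by (auto simp: emeasure_eq_measure elim!: AE_mp eventually_mono)

lemma (in prob_space) prob_le_of_density_le:
  assumes X: "distributed M lborel X (\<lambda>x. ennreal (f x))" and A: "A \<in> sets borel"
    and g: "prob_space (density lborel (\<lambda>x. ennreal (g x)))" "g \<in> borel_measurable borel"
    and "0 \<le> \<kappa>" and le: "\<And>x. x \<in> A \<Longrightarrow> f x \<le> \<kappa> * g x"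
  shows "prob (X -` A \<inter> space M) \<le> \<kappa>"
proof -
  have "emeasure M (X -` A \<inter> space M) = (\<integral>\<^sup>+x. ennreal (f x) * indicator A x \<partial>lborel)"
    using X A by (intro distributed_emeasure) auto
  also have "\<dots> \<le> (\<integral>\<^sup>+x. ennreal \<kappa> * ennreal (g x) \<partial>lborel)"
    using le \<open>0 \<le> \<kappa>\<close> by (intro nn_integral_mono) (auto simp: ennreal_mult'[symmetric] intro!: ennreal_leI split: split_indicator)
  also have "\<dots> = ennreal \<kappa> * emeasure (density lborel (\<lambda>x. ennreal (g x))) UNIV"
    using g(2) by (simp add: nn_integral_cmult emeasure_density)
  also have "\<dots> = ennreal \<kappa>"
    using prob_space.emeasure_space_1[OF g(1)] by simp
  finally show ?thesis using \<open>0 \<le> \<kappa>\<close> by (simp add: emeasure_eq_measure)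
qed

text \<open>A Chernoff bound: compare the Erlang density of rate 1 with that of rate 2.\<close>
lemma (in prob_space) erlang_lower_tail:
  assumes "distributed M lborel X (erlang_density n 1)"
  shows "prob {\<omega>\<in>space M. X \<omega> \<le> r} \<le> exp r / 2 ^ Suc n"
proof -
  have le: "erlang_density n 1 x \<le> exp r / 2 ^ Suc n * erlang_density n 2 x" if "x \<in> {..r}" for x
  proof (cases "x < 0")
    case False
    have "exp (- x) \<le> exp r * exp (- 2 * x)"
      using that by (simp add: mult_exp_exp)
    then have "x ^ n * exp (- x) / fact n \<le> x ^ n * (exp r * exp (- 2 * x)) / fact n"
      using False by (intro divide_right_mono mult_left_mono) auto
    with False show ?thesis by (simp add: erlang_density_def field_simps)
  qed (simp add: erlang_density_def)
  have "prob (X -` {..r} \<inter> space M) \<le> exp r / 2 ^ Suc n"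
    by (rule prob_le_of_density_le[OF assms _ prob_space_erlang_density]) (use le in auto)
  moreover have "X -` {..r} \<inter> space M = {\<omega>\<in>space M. X \<omega> \<le> r}" by auto
  ultimately show ?thesis by simp
qed

text \<open>Compare the standard normal density with the normal density of variance 2.\<close>
lemma (in prob_space) std_normal_tail:
  assumes "distributed M lborel X std_normal_density" and "0 \<le> t"
  shows "prob {\<omega>\<in>space M. t < \<bar>X \<omega>\<bar>} \<le> sqrt 2 * exp (- t\<^sup>2 / 4)"
proof -
  have le: "std_normal_density x \<le> sqrt 2 * exp (- t\<^sup>2 / 4) * normal_density 0 (sqrt 2) x"
    if "x \<in> {x. t < \<bar>x\<bar>}" for x
  proof -
    have "t\<^sup>2 \<le> x\<^sup>2"
      using that \<open>0 \<le> t\<close> by (metis abs_le_square_iff abs_of_nonneg less_imp_le mem_Collect_eq)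
    then have "exp (- x\<^sup>2 / 2) \<le> exp (- t\<^sup>2 / 4) * exp (- x\<^sup>2 / 4)"
      by (simp add: mult_exp_exp)
    then have "std_normal_density x \<le> 1 / sqrt (2 * pi) * (exp (- t\<^sup>2 / 4) * exp (- x\<^sup>2 / 4))"
      unfolding std_normal_density_def by (intro mult_left_mono) auto
    also have "\<dots> = sqrt 2 * exp (- t\<^sup>2 / 4) * (1 / (sqrt 2 * sqrt (2 * pi)) * exp (- x\<^sup>2 / 4))"
      by simp
    also have "1 / (sqrt 2 * sqrt (2 * pi)) * exp (- x\<^sup>2 / 4) = normal_density 0 (sqrt 2) x"
      by (simp add: normal_density_def real_sqrt_mult[symmetric] mult.assoc)
    finally show ?thesis .
  qed
  have "prob (X -` {x. t < \<bar>x\<bar>} \<inter> space M) \<le> sqrt 2 * exp (- t\<^sup>2 / 4)"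
    by (rule prob_le_of_density_le[OF assms(1) _ prob_space_normal_density]) (use le in auto)
  moreover have "X -` {x. t < \<bar>x\<bar>} \<inter> space M = {\<omega>\<in>space M. t < \<bar>X \<omega>\<bar>}" by auto
  ultimately show ?thesis by simp
qed

lemma (in prob_space) weak_conv_distr_of_AE_tendsto:
  fixes X :: "nat \<Rightarrow> 'a \<Rightarrow> real"
  assumes [measurable]: "\<And>n. X n \<in> borel_measurable M" "Y \<in> borel_measurable M"
    and lim: "AE \<omega> in M. (\<lambda>n. X n \<omega>) \<longlonglongrightarrow> Y \<omega>"
  shows "weak_conv_m (\<lambda>n. distr M borel (X n)) (distr M borel Y)"
proof (rule integral_bdd_continuous_conv_imp_weak_conv)
  fix f :: "real \<Rightarrow> real" assume f: "\<And>x. isCont f x" "\<And>x. \<bar>f x\<bar> \<le> 1"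
  then have [measurable]: "f \<in> borel_measurable borel"
    by (intro borel_measurable_continuous_onI continuous_at_imp_continuous_on) auto
  have "(\<lambda>n. \<integral>\<omega>. f (X n \<omega>) \<partial>M) \<longlonglongrightarrow> (\<integral>\<omega>. f (Y \<omega>) \<partial>M)"
  proof (rule integral_dominated_convergence[where w = "\<lambda>_. 1"])
    show "AE \<omega> in M. (\<lambda>n. f (X n \<omega>)) \<longlonglongrightarrow> f (Y \<omega>)"
      using lim by eventually_elim (rule isCont_tendsto_compose[OF f(1)])
  qed (use f(2) in auto)
  then show "(\<lambda>n. integral\<^sup>L (distr M borel (X n)) f) \<longlonglongrightarrow> integral\<^sup>L (distr M borel Y) f"
    by (simp add: integral_distr)
qed (auto intro!: real_distribution_distr)

lemma (in prob_space) AE_eventually_half_lt_erlang: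
  assumes S: "\<And>n. 1 \<le> n \<Longrightarrow> distributed M lborel (S n) (erlang_density (n - 1) 1)"
  shows "AE \<omega> in M. eventually (\<lambda>n. real n / 2 < S n \<omega>) sequentially"
proof -
  define q :: real where "q = exp (1/2) / 2"
  have "exp (1/2 :: real) < exp (ln 2)"
    using ln2_ge_two_thirds by (subst exp_less_cancel_iff) linarith
  then have "q < 1" by (simp add: q_def)
  \<comment> \<open>The guard \<open>1 \<le> n\<close> is needed because \<open>S 0\<close> need not be measurable.\<close>
  have "AE \<omega> in M. eventually (\<lambda>n. 1 \<le> n \<longrightarrow> real n / 2 < S n \<omega>) sequentially"
  proof (rule AE_eventually_of_summable_prob)
    have [measurable]: "S n \<in> borel_measurable M" if "1 \<le> n" for n
      using distributed_measurable[OF S[OF that]] by simp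
    show "{\<omega>\<in>space M. \<not> (1 \<le> n \<longrightarrow> real n / 2 < S n \<omega>)} \<in> events" for n
      by (cases "n = 0") simp_all
    have tail: "prob {\<omega>\<in>space M. \<not> (1 \<le> n \<longrightarrow> real n / 2 < S n \<omega>)} \<le> q ^ n" for n
    proof (cases "n = 0")
      case False
      have "exp (real n / 2) = exp (1/2) ^ n"
        using exp_of_nat_mult[of n "1/2 :: real"] by simp
      with False show ?thesis
        using erlang_lower_tail[OF S, of n "real n / 2"] by (simp add: q_def power_divide not_less)
    qed simp
    show "summable (\<lambda>n. prob {\<omega>\<in>space M. \<not> (1 \<le> n \<longrightarrow> real n / 2 < S n \<omega>)})"
      by (rule summable_comparison_test[OF _ summable_geometric[of q]]) (use tail \<open>q < 1\<close> in \<open>auto simp: q_def\<close>)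
  qed
  then show ?thesis
  proof (rule eventually_mono)
    fix \<omega> assume "eventually (\<lambda>n. 1 \<le> n \<longrightarrow> real n / 2 < S n \<omega>) sequentially"
    then show "eventually (\<lambda>n. real n / 2 < S n \<omega>) sequentially"
      using eventually_ge_at_top[of "1::nat"] by eventually_elim simp
  qed
qed

lemma (in prob_space) AE_eventually_gaussian_array_le:
  assumes Z: "\<And>i j. 1 \<le> i \<Longrightarrow> i < j \<Longrightarrow> distributed M lborel (Z i j) std_normal_density"
  shows "AE \<omega> in M. eventually (\<lambda>j. \<forall>i\<in>{1..<j}. \<bar>Z i j \<omega>\<bar> \<le> 4 * sqrt (ln (real j))) sequentially"
proof (rule AE_eventually_of_summable_prob)
  define t :: "nat \<Rightarrow> real" where "t j = 4 * sqrt (ln (real j))" for j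
  define E where "E i j = {\<omega>\<in>space M. t j < \<bar>Z i j \<omega>\<bar>}" for i j
  have E: "E i j \<in> events" if "i \<in> {1..<j}" for i j
  proof -
    have [measurable]: "Z i j \<in> borel_measurable M"
      using that distributed_measurable[OF Z[of i j]] by simp
    show ?thesis unfolding E_def by measurable
  qed
  have split: "{\<omega>\<in>space M. \<not> (\<forall>i\<in>{1..<j}. \<bar>Z i j \<omega>\<bar> \<le> t j)} = (\<Union>i\<in>{1..<j}. E i j)" for j
    by (auto simp: E_def not_le)
  show "{\<omega>\<in>space M. \<not> (\<forall>i\<in>{1..<j}. \<bar>Z i j \<omega>\<bar> \<le> 4 * sqrt (ln (real j)))} \<in> events" for j
    using split[of j] E unfolding t_def by auto
  have "exp (- (t j)\<^sup>2 / 4) = inverse (real j ^ 4)" if "1 \<le> j" for j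
  proof -
    have "(t j)\<^sup>2 / 4 = real 4 * ln (real j)"
      using that by (simp add: t_def power_mult_distrib)
    then show ?thesis
      using that exp_of_nat_mult[of 4 "ln (real j)"] by (simp add: exp_minus)
  qed
  then have E_tail: "prob (E i j) \<le> sqrt 2 * inverse (real j ^ 4)" if "i \<in> {1..<j}" for i j
    using std_normal_tail[OF Z, of i j "t j"] that unfolding E_def by (auto simp: t_def)
  have bound: "prob (\<Union>i\<in>{1..<j}. E i j) \<le> sqrt 2 * inverse (real j ^ 3)" for j
  proof -
    have "prob (\<Union>i\<in>{1..<j}. E i j) \<le> (\<Sum>i\<in>{1..<j}. prob (E i j))"
      using E by (intro measure_UNION_le) auto
    also have "\<dots> \<le> (\<Sum>i\<in>{1..<j}. sqrt 2 * inverse (real j ^ 4))"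
      using E_tail by (intro sum_mono) auto
    also have "\<dots> \<le> sqrt 2 * inverse (real j ^ 3)"
    proof (cases "j = 0")
      case False
      have "(\<Sum>i\<in>{1..<j}. sqrt 2 * inverse (real j ^ 4)) \<le> real j * (sqrt 2 * inverse (real j ^ 4))"
        by (simp add: mult_right_mono)
      also have "\<dots> = sqrt 2 * inverse (real j ^ 3)"
        using False by (simp add: field_simps eval_nat_numeral)
      finally show ?thesis .
    qed simp
    finally show ?thesis .
  qed
  show "summable (\<lambda>j. prob {\<omega>\<in>space M. \<not> (\<forall>i\<in>{1..<j}. \<bar>Z i j \<omega>\<bar> \<le> 4 * sqrt (ln (real j)))})"
    by (rule summable_comparison_test[OF _ summable_mult[OF inverse_power_summable[of 3]]])
      (use bound split in \<open>auto simp: t_def\<close>)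
qed

definition Y_levels_finite :: "(nat \<Rightarrow> 'a \<Rightarrow> real) \<Rightarrow> (nat \<Rightarrow> nat \<Rightarrow> 'a \<Rightarrow> real) \<Rightarrow> 'a \<Rightarrow> bool" where
  "Y_levels_finite \<zeta> Z \<omega> \<longleftrightarrow> (\<forall>C\<ge>0. \<forall>K. finite
     {(i, j). 1 \<le> i \<and> i < j \<and> K \<le> (eta_rv \<zeta> i \<omega> + eta_rv \<zeta> j \<omega>) / sqrt 2 + C * \<bar>Z i j \<omega>\<bar>})"

lemma
  assumes "Y_levels_finite \<zeta> Z \<omega>"
  shows Y_rv_less_infinity: "Y_rv \<zeta> Z c \<omega> < \<infinity>"
    and isCont_Y_rv: "isCont (\<lambda>c. real_of_ereal (Y_rv \<zeta> Z c \<omega>)) c"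
proof -
  let ?P = "{(i, j). 1 \<le> i \<and> i < j} :: (nat \<times> nat) set"
  let ?a = "\<lambda>p. (eta_rv \<zeta> (fst p) \<omega> + eta_rv \<zeta> (snd p) \<omega>) / sqrt 2"
  let ?b = "\<lambda>p. Z (fst p) (snd p) \<omega>"
  have Y: "Y_rv \<zeta> Z c \<omega> = (SUP p\<in>?P. ereal (?a p + c * ?b p))" for c
    unfolding Y_rv_def ..
  have "{p\<in>?P. K \<le> ?a p + C * \<bar>?b p\<bar>} =
      {(i, j). 1 \<le> i \<and> i < j \<and> K \<le> (eta_rv \<zeta> i \<omega> + eta_rv \<zeta> j \<omega>) / sqrt 2 + C * \<bar>Z i j \<omega>\<bar>}" for C K
    by auto
  then have levels: "finite {p\<in>?P. K \<le> ?a p + C * \<bar>?b p\<bar>}" if "0 \<le> C" for C K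
    using assms that unfolding Y_levels_finite_def by simp
  have "(1, 2) \<in> ?P" by simp
  then have "?P \<noteq> {}" by blast
  show "Y_rv \<zeta> Z c \<omega> < \<infinity>"
    unfolding Y by (rule SUP_affine_less_infinity[OF levels \<open>?P \<noteq> {}\<close>])
  show "isCont (\<lambda>c. real_of_ereal (Y_rv \<zeta> Z c \<omega>)) c"
    unfolding Y by (rule isCont_SUP_affine[OF levels \<open>?P \<noteq> {}\<close>])
qed

lemma measurable_Y_rv:
  assumes [measurable]: "\<And>k. 1 \<le> k \<Longrightarrow> \<zeta> k \<in> borel_measurable M"
    and Z: "\<And>i j. 1 \<le> i \<Longrightarrow> i < j \<Longrightarrow> Z i j \<in> borel_measurable M"
  shows "Y_rv \<zeta> Z c \<in> borel_measurable M"
proof -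
  have [measurable]: "eta_rv \<zeta> i \<in> borel_measurable M" for i
    unfolding eta_rv_def[abs_def] by measurable
  show ?thesis
    unfolding Y_rv_def[abs_def]
  proof (rule borel_measurable_SUP)
    fix p :: "nat \<times> nat" assume "p \<in> {(i, j). 1 \<le> i \<and> i < j}"
    then have [measurable]: "Z (fst p) (snd p) \<in> borel_measurable M" by (auto intro: Z)
    show "(\<lambda>\<omega>. ereal ((eta_rv \<zeta> (fst p) \<omega> + eta_rv \<zeta> (snd p) \<omega>) / sqrt 2 + c * Z (fst p) (snd p) \<omega>))
        \<in> borel_measurable M" by measurable
  qed simp
qed

lemma (in prob_space) partial_sums_erlang:
  assumes exp: "\<And>k. 1 \<le> k \<Longrightarrow> distributed M lborel (\<zeta> k) (exponential_density 1)"
    and indep: "indep_vars (\<lambda>_. borel) (joint_family \<zeta> Z) joint_index"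
    and "1 \<le> n"
  shows "distributed M lborel (\<lambda>\<omega>. \<Sum>k\<in>{1..n}. \<zeta> k \<omega>) (erlang_density (n - 1) 1)"
proof -
  have "distributed M lborel (\<lambda>\<omega>. \<Sum>x\<in>Inl ` {1..n}. joint_family \<zeta> Z x \<omega>)
      (erlang_density (card (Inl ` {1..n} :: (nat + nat \<times> nat) set) - 1) 1)"
  proof (rule exponential_distributed_sum)
    show "indep_vars (\<lambda>_. borel) (joint_family \<zeta> Z) (Inl ` {1..n})"
      by (rule indep_vars_subset[OF indep]) (auto simp: joint_index_def)
  qed (use \<open>1 \<le> n\<close> in \<open>auto simp: joint_family_def intro!: exp\<close>)
  then show ?thesis
    by (simp add: sum.reindex card_image joint_family_def)
qed

lemma (in prob_space) AE_Y_levels_finite: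
  assumes exp: "\<And>k. 1 \<le> k \<Longrightarrow> distributed M lborel (\<zeta> k) (exponential_density 1)"
    and gauss: "\<And>i j. 1 \<le> i \<Longrightarrow> i < j \<Longrightarrow> distributed M lborel (Z i j) std_normal_density"
    and indep: "indep_vars (\<lambda>_. borel) (joint_family \<zeta> Z) joint_index"
  shows "AE \<omega> in M. Y_levels_finite \<zeta> Z \<omega>"
proof -
  have "AE \<omega> in M. eventually (\<lambda>n. real n / 2 < (\<Sum>k\<in>{1..n}. \<zeta> k \<omega>)) sequentially"
    by (rule AE_eventually_half_lt_erlang) (rule partial_sums_erlang[OF exp indep])
  moreover have "AE \<omega> in M. eventually (\<lambda>j. \<forall>i\<in>{1..<j}. \<bar>Z i j \<omega>\<bar> \<le> 4 * sqrt (ln (real j))) sequentially"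
    using gauss by (rule AE_eventually_gaussian_array_le)
  ultimately show ?thesis
  proof eventually_elim
    case (elim \<omega>)
    obtain U where U: "\<And>i. 1 \<le> i \<Longrightarrow> eta_rv \<zeta> i \<omega> \<le> U - ln (real i)"
      using ln_ge_ln_minus_const_of_eventually_gt_half[OF elim(1)] unfolding eta_rv_def by blast
    show ?case
      unfolding Y_levels_finite_def by (intro allI impI finite_pair_level_sets[OF U elim(2)]) simp_all
  qed
qed

theorem lemma9p3:
  fixes M :: "'a measure"
    and \<zeta> :: "nat \<Rightarrow> 'a \<Rightarrow> real"
    and Z :: "nat \<Rightarrow> nat \<Rightarrow> 'a \<Rightarrow> real"
  assumes "prob_space M"
    and exp: "\<And>k. 1 \<le> k \<Longrightarrow> distributed M lborel (\<zeta> k) (exponential_density 1)"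
    and gauss: "\<And>i j. 1 \<le> i \<Longrightarrow> i < j \<Longrightarrow> distributed M lborel (Z i j) std_normal_density"
    and indep: "prob_space.indep_vars M (\<lambda>_. borel) (joint_family \<zeta> Z) joint_index"
  shows "(\<forall>c\<ge>0. AE \<omega> in M. Y_rv \<zeta> Z c \<omega> < \<infinity>)
       \<and> (\<forall>c (\<gamma> :: nat \<Rightarrow> real). (\<forall>m. 0 \<le> \<gamma> m) \<longrightarrow> \<gamma> \<longlonglongrightarrow> c \<longrightarrow>
            weak_conv_m (\<lambda>m. distr M borel (\<lambda>\<omega>. real_of_ereal (Y_rv \<zeta> Z (\<gamma> m) \<omega>)))
                        (distr M borel (\<lambda>\<omega>. real_of_ereal (Y_rv \<zeta> Z c \<omega>))))"
proof -
  interpret prob_space M by fact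
  have levels: "AE \<omega> in M. Y_levels_finite \<zeta> Z \<omega>"
    using exp gauss indep by (rule AE_Y_levels_finite)
  have "\<zeta> k \<in> borel_measurable M" if "1 \<le> k" for k
    using distributed_measurable[OF exp[OF that]] by simp
  moreover have "Z i j \<in> borel_measurable M" if "1 \<le> i" "i < j" for i j
    using distributed_measurable[OF gauss[OF that]] by simp
  ultimately have [measurable]: "Y_rv \<zeta> Z c \<in> borel_measurable M" for c
    by (rule measurable_Y_rv)
  show ?thesis
  proof (intro conjI allI impI)
    show "AE \<omega> in M. Y_rv \<zeta> Z c \<omega> < \<infinity>" for c
      using levels by eventually_elim (rule Y_rv_less_infinity)
    fix c and \<gamma> :: "nat \<Rightarrow> real" assume "\<gamma> \<longlonglongrightarrow> c"
    have "AE \<omega> in M. (\<lambda>m. real_of_ereal (Y_rv \<zeta> Z (\<gamma> m) \<omega>)) \<longlonglongrightarrow> real_of_ereal (Y_rv \<zeta> Z c \<omega>)"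
      using levels by eventually_elim (rule isCont_tendsto_compose[OF isCont_Y_rv \<open>\<gamma> \<longlonglongrightarrow> c\<close>])
    then show "weak_conv_m (\<lambda>m. distr M borel (\<lambda>\<omega>. real_of_ereal (Y_rv \<zeta> Z (\<gamma> m) \<omega>)))
        (distr M borel (\<lambda>\<omega>. real_of_ereal (Y_rv \<zeta> Z c \<omega>)))"
      by (intro weak_conv_distr_of_AE_tendsto) measurable
  qed
qed

end
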